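(* Let $d\ge3$, $\chi^0=c_0(-\mu)^{1-d/2}$ with $c_0\neq0$, and let $\xi^a$ be a timelike vector field with $\nabla_aT_0^{ab}=0$, where $T_0^{ab}=4\chi^0_{\mu\mu}\xi^a\xi^b+2\chi^0_\mu g^{ab}$. Then (i) $\dot\mu/\mu=2D/d$ and $\dot\xi^b=(\dot\mu/\mu)\xi^b-\tfrac12\nabla^b\mu$; (ii) the entropy current $S_0^a:=\partial\chi^0/\partial\xi_a-\xi_bT_0^{ab}=-4\mu\chi^0_{\mu\mu}\xi^a$ satisfies $\nabla_aS_0^a=0$; (iii) if $\nabla_{(a}\xi_{b)}=t\,g_{ab}+s\,\xi_a\xi_b$ for some functions $t,s$, then $s=0$ and $t=D/d$, i.e. $\xi^a$ is a conformal Killing vector field.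
   Context: $\mu:=\xi^c\xi_c$, $D:=\nabla_c\xi^c$, $\dot\mu:=\xi^a\nabla_a\mu$, $\dot\xi^b:=\xi^a\nabla_a\xi^b$; subscripts $\mu$ denote derivatives with respect to $\mu$. *)

theory Defs
  imports "HOL-Analysis.Analysis"
begin

text \<open>Local-coordinate setting: an open coordinate patch U of R^d (d = CARD('n)),
  a metric g (components g_ab, as a matrix), its inverse g^ab, Levi-Civita connection.\<close>

definition pd :: "(real^'n \<Rightarrow> real) \<Rightarrow> 'n \<Rightarrow> real^'n \<Rightarrow> real" where
  "pd f c x = frechet_derivative f (at x) (axis c 1)"

coinductive smooth_on :: "(real^'n) set \<Rightarrow> (real^'n \<Rightarrow> real) \<Rightarrow> bool" where
  "\<lbrakk>\<forall>x\<in>U. f differentiable (at x); \<forall>c. smooth_on U (pd f c)\<rbrakk> \<Longrightarrow> smooth_on U f"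

definition lorentzian :: "real^'n^'n \<Rightarrow> bool" where
  "lorentzian M \<longleftrightarrow> transpose M = M \<and>
     (\<exists>(P::real^'n^'n) i0. invertible P \<and>
        transpose P ** M ** P = (\<chi> a b. if a = b then (if a = i0 then -1 else 1) else 0))"

definition ginv :: "(real^'n \<Rightarrow> real^'n^'n) \<Rightarrow> real^'n \<Rightarrow> real^'n^'n" where
  "ginv g x = matrix_inv (g x)"

definition christoffel :: "(real^'n \<Rightarrow> real^'n^'n) \<Rightarrow> real^'n \<Rightarrow> 'n \<Rightarrow> 'n \<Rightarrow> 'n \<Rightarrow> real" where
  "christoffel g x a b c = (1/2) * (\<Sum>e\<in>UNIV. ginv g x $ a $ e *
      (pd (\<lambda>y. g y $ e $ c) b x + pd (\<lambda>y. g y $ e $ b) c x - pd (\<lambda>y. g y $ b $ c) e x))"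

definition covd_vec :: "(real^'n \<Rightarrow> real^'n^'n) \<Rightarrow> (real^'n \<Rightarrow> real^'n) \<Rightarrow> real^'n \<Rightarrow> 'n \<Rightarrow> 'n \<Rightarrow> real" where
  "covd_vec g V x a b = pd (\<lambda>y. V y $ b) a x + (\<Sum>c\<in>UNIV. christoffel g x b a c * V x $ c)"

definition div_vec :: "(real^'n \<Rightarrow> real^'n^'n) \<Rightarrow> (real^'n \<Rightarrow> real^'n) \<Rightarrow> real^'n \<Rightarrow> real" where
  "div_vec g V x = (\<Sum>a\<in>UNIV. covd_vec g V x a a)"

definition div_tensor :: "(real^'n \<Rightarrow> real^'n^'n) \<Rightarrow> (real^'n \<Rightarrow> real^'n^'n) \<Rightarrow> real^'n \<Rightarrow> 'n \<Rightarrow> real" where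
  "div_tensor g T x b = (\<Sum>a\<in>UNIV. pd (\<lambda>y. T y $ a $ b) a x
      + (\<Sum>c\<in>UNIV. christoffel g x a a c * T x $ c $ b + christoffel g x b a c * T x $ a $ c))"

definition lower :: "(real^'n \<Rightarrow> real^'n^'n) \<Rightarrow> (real^'n \<Rightarrow> real^'n) \<Rightarrow> real^'n \<Rightarrow> real^'n" where
  "lower g V x = (\<chi> a. \<Sum>b\<in>UNIV. g x $ a $ b * V x $ b)"

definition mu :: "(real^'n \<Rightarrow> real^'n^'n) \<Rightarrow> (real^'n \<Rightarrow> real^'n) \<Rightarrow> real^'n \<Rightarrow> real" where
  "mu g xi x = (\<Sum>a\<in>UNIV. \<Sum>b\<in>UNIV. g x $ a $ b * xi x $ a * xi x $ b)"

definition dotd :: "(real^'n \<Rightarrow> real^'n) \<Rightarrow> (real^'n \<Rightarrow> real) \<Rightarrow> real^'n \<Rightarrow> real" where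
  "dotd xi f x = (\<Sum>a\<in>UNIV. xi x $ a * pd f a x)"

definition accel :: "(real^'n \<Rightarrow> real^'n^'n) \<Rightarrow> (real^'n \<Rightarrow> real^'n) \<Rightarrow> real^'n \<Rightarrow> 'n \<Rightarrow> real" where
  "accel g xi x b = (\<Sum>a\<in>UNIV. xi x $ a * covd_vec g xi x a b)"

definition grad_up :: "(real^'n \<Rightarrow> real^'n^'n) \<Rightarrow> (real^'n \<Rightarrow> real) \<Rightarrow> real^'n \<Rightarrow> 'n \<Rightarrow> real" where
  "grad_up g f x b = (\<Sum>a\<in>UNIV. ginv g x $ b $ a * pd f a x)"

definition chi0 :: "real \<Rightarrow> nat \<Rightarrow> real \<Rightarrow> real" where
  "chi0 c0 d m = c0 * (-m) powr (1 - real d / 2)"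

definition T0 :: "real \<Rightarrow> nat \<Rightarrow> (real^'n \<Rightarrow> real^'n^'n) \<Rightarrow> (real^'n \<Rightarrow> real^'n) \<Rightarrow> real^'n \<Rightarrow> real^'n^'n" where
  "T0 c0 d g xi x = (\<chi> a b.
      4 * deriv (deriv (chi0 c0 d)) (mu g xi x) * xi x $ a * xi x $ b
    + 2 * deriv (chi0 c0 d) (mu g xi x) * ginv g x $ a $ b)"

text \<open>S_0^a = d chi^0 / d xi_a - xi_b T_0^ab, where chi^0 is regarded as a function of the
  covector xi_a through mu = g^ab xi_a xi_b.\<close>
definition S0 :: "real \<Rightarrow> nat \<Rightarrow> (real^'n \<Rightarrow> real^'n^'n) \<Rightarrow> (real^'n \<Rightarrow> real^'n) \<Rightarrow> real^'n \<Rightarrow> real^'n" where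
  "S0 c0 d g xi x = (\<chi> a.
      frechet_derivative (\<lambda>\<eta>::real^'n. chi0 c0 d (\<Sum>p\<in>UNIV. \<Sum>q\<in>UNIV. ginv g x $ p $ q * \<eta> $ p * \<eta> $ q))
         (at (lower g xi x)) (axis a 1)
    - (\<Sum>b\<in>UNIV. lower g xi x $ b * T0 c0 d g xi x $ a $ b))"

definition symcov :: "(real^'n \<Rightarrow> real^'n^'n) \<Rightarrow> (real^'n \<Rightarrow> real^'n) \<Rightarrow> real^'n \<Rightarrow> 'n \<Rightarrow> 'n \<Rightarrow> real" where
  "symcov g xi x a b = (1/2) * ((\<Sum>c\<in>UNIV. g x $ b $ c * covd_vec g xi x a c)
                              + (\<Sum>c\<in>UNIV. g x $ a $ c * covd_vec g xi x b c))"

end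

theory Submission
  imports Defs
begin

text \<open>Contract the conservation law \<open>\<nabla>\<^sub>a T\<^sup>a\<^sup>b = 0\<close> with \<open>\<xi>\<^sub>b\<close>. Metric compatibility, in the
  forms \<open>\<xi>\<^sub>b \<nabla>\<^sub>a \<xi>\<^sup>b = \<partial>\<^sub>a \<mu> / 2\<close> and \<open>\<nabla>\<^sub>a g\<^sup>a\<^sup>b = 0\<close>, together with the homogeneity
  \<open>\<mu> \<chi>\<^sub>\<mu>\<^sub>\<mu>\<^sub>\<mu> = -(d/2 + 1) \<chi>\<^sub>\<mu>\<^sub>\<mu>\<close> of the power law \<open>\<chi>\<^sup>0\<close>, reduces it to
  \<open>\<chi>\<^sub>\<mu>\<^sub>\<mu> (2 D \<mu> - d \<mu>') = 0\<close>. As \<open>\<chi>\<^sub>\<mu>\<^sub>\<mu> \<noteq> 0\<close> this is the expansion rate, and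
  substituting it back into the uncontracted law gives the acceleration. The entropy current is
  \<open>-4 \<mu> \<chi>\<^sub>\<mu>\<^sub>\<mu> \<xi>\<close>, whose divergence \<open>-4 \<chi>\<^sub>\<mu>\<^sub>\<mu> (\<mu> D - d \<mu>' / 2)\<close> vanishes by the
  same two facts. Finally, contracting \<open>\<nabla>\<^sub>(\<^sub>a \<xi>\<^sub>b\<^sub>) = t g\<^sub>a\<^sub>b + s \<xi>\<^sub>a \<xi>\<^sub>b\<close> with
  \<open>\<xi>\<^sup>a \<xi>\<^sup>b\<close> and with \<open>g\<^sup>a\<^sup>b\<close> gives \<open>\<mu>' / 2 = t \<mu> + s \<mu>\<^sup>2\<close> and \<open>D = d t + s \<mu>\<close>;
  with the expansion rate this forces \<open>(d - 1) s \<mu>\<^sup>2 = 0\<close>.\<close>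

lemma sum_delta_mult:
  "(\<Sum>c\<in>UNIV. (if c = a then 1 else 0) * F c) = (F (a::'n::finite) :: 'a::comm_ring_1)"
proof -
  have "(\<Sum>c\<in>UNIV. (if c = a then 1 else 0) * F c) = (\<Sum>c\<in>UNIV. if c = a then F c else 0)"
    by (rule sum.cong) auto
  then show ?thesis by simp
qed

lemma sum_delta_mult':
  "(\<Sum>c\<in>UNIV. (if a = c then 1 else 0) * F c) = (F (a::'n::finite) :: 'a::comm_ring_1)"
  using sum_delta_mult[of a F] by (simp add: eq_commute)

lemma sum_axis_mult: "(\<Sum>c\<in>UNIV. axis a (1::real) $ c * F c) = F a"
  by (simp add: axis_def sum_delta_mult)

lemma sum_cycle3:
  "(\<Sum>a\<in>A. \<Sum>b\<in>B. \<Sum>c\<in>C. f a b c) = (\<Sum>b\<in>B. \<Sum>c\<in>C. \<Sum>a\<in>A. f a b c)"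
proof -
  have "(\<Sum>a\<in>A. \<Sum>b\<in>B. \<Sum>c\<in>C. f a b c) = (\<Sum>b\<in>B. \<Sum>a\<in>A. \<Sum>c\<in>C. f a b c)"
    by (rule sum.swap)
  also have "\<dots> = (\<Sum>b\<in>B. \<Sum>c\<in>C. \<Sum>a\<in>A. f a b c)"
    by (rule sum.cong[OF refl], rule sum.swap)
  finally show ?thesis .
qed

lemma sum_reverse3:
  "(\<Sum>a\<in>A. \<Sum>b\<in>B. \<Sum>c\<in>C. f a b c) = (\<Sum>c\<in>C. \<Sum>b\<in>B. \<Sum>a\<in>A. f a b c)"
  by (subst sum_cycle3) (rule sum.swap)

lemma sum_contract:
  "(\<Sum>b\<in>B. u b * (\<Sum>e\<in>E. v b e * w e)) = (\<Sum>e\<in>E. (\<Sum>b\<in>B. u b * v b e) * (w e :: 'a::comm_semiring_1))"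
proof -
  have "(\<Sum>b\<in>B. u b * (\<Sum>e\<in>E. v b e * w e)) = (\<Sum>b\<in>B. \<Sum>e\<in>E. u b * v b e * w e)"
    by (simp add: sum_distrib_left mult.assoc)
  also have "\<dots> = (\<Sum>e\<in>E. \<Sum>b\<in>B. u b * v b e * w e)"
    by (rule sum.swap)
  finally show ?thesis by (simp add: sum_distrib_right)
qed

section \<open>Partial derivatives\<close>

lemma pd_eq: "(f has_derivative D) (at x) \<Longrightarrow> pd f c x = D (axis c 1)"
  unfolding pd_def by (metis frechet_derivative_at)

lemma has_derivative_pd:
  assumes "f differentiable (at x)"
  shows "(f has_derivative (\<lambda>h. \<Sum>c\<in>UNIV. h $ c * pd f c x)) (at x)"
proof -
  let ?D = "frechet_derivative f (at x)"
  have D: "(f has_derivative ?D) (at x)"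
    using assms frechet_derivative_works by blast
  have "?D h = (\<Sum>c\<in>UNIV. h $ c * pd f c x)" for h :: "real^'a"
  proof -
    have "h = (\<Sum>c\<in>UNIV. h $ c *\<^sub>R axis c 1)"
      using basis_expansion[of h] by (simp add: scalar_mult_eq_scaleR)
    then have "?D h = ?D (\<Sum>c\<in>UNIV. h $ c *\<^sub>R axis c 1)" by simp
    also have "\<dots> = (\<Sum>c\<in>UNIV. h $ c * ?D (axis c 1))"
      using has_derivative_linear[OF D] by (simp add: linear_sum linear_cmul)
    finally show ?thesis by (simp add: pd_def)
  qed
  then have "?D = (\<lambda>h. \<Sum>c\<in>UNIV. h $ c * pd f c x)" by (rule ext)
  with D show ?thesis by simp
qed

lemma pd_mult:
  "f differentiable (at x) \<Longrightarrow> h differentiable (at x) \<Longrightarrow>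
   pd (\<lambda>y. f y * h y) c x = f x * pd h c x + pd f c x * h x"
  by (subst pd_eq[OF has_derivative_mult[OF has_derivative_pd has_derivative_pd]])
     (auto simp: sum_axis_mult)

lemma pd_add:
  "f differentiable (at x) \<Longrightarrow> h differentiable (at x) \<Longrightarrow>
   pd (\<lambda>y. f y + h y) c x = pd f c x + pd h c x"
  by (subst pd_eq[OF has_derivative_add[OF has_derivative_pd has_derivative_pd]])
     (auto simp: sum_axis_mult)

lemma pd_const: "pd (\<lambda>y. k) c x = 0"
  by (subst pd_eq[OF has_derivative_const]) auto

lemma pd_sum:
  "finite S \<Longrightarrow> (\<And>i. i \<in> S \<Longrightarrow> f i differentiable (at x)) \<Longrightarrow>
   pd (\<lambda>y. \<Sum>i\<in>S. f i y) c x = (\<Sum>i\<in>S. pd (f i) c x)"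
  by (subst pd_eq[OF has_derivative_sum[OF has_derivative_pd]]) (auto simp: sum_axis_mult)

lemma pd_chain:
  "(F has_real_derivative F') (at (f x)) \<Longrightarrow> f differentiable (at x) \<Longrightarrow>
   pd (\<lambda>y. F (f y)) c x = F' * pd f c x"
  by (subst pd_eq[OF has_derivative_compose[OF has_derivative_pd]])
     (auto simp: has_field_derivative_def sum_axis_mult)

lemma has_derivative_cong_open:
  assumes "(h has_derivative D) (at x)" "open U" "x \<in> U" "\<And>y. y \<in> U \<Longrightarrow> f y = h y"
  shows "(f has_derivative D) (at x)"
  using has_derivative_transform_within_open[OF assms(1-3)] assms(4) by simp

lemma differentiable_cong_open:
  "h differentiable (at x) \<Longrightarrow> open U \<Longrightarrow> x \<in> U \<Longrightarrow> (\<And>y. y \<in> U \<Longrightarrow> f y = h y) \<Longrightarrow>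
   f differentiable (at x)"
  unfolding differentiable_def by (metis has_derivative_cong_open)

lemma pd_cong_open:
  "h differentiable (at x) \<Longrightarrow> open U \<Longrightarrow> x \<in> U \<Longrightarrow> (\<And>y. y \<in> U \<Longrightarrow> f y = h y) \<Longrightarrow>
   pd f c x = pd h c x"
  by (subst pd_eq[OF has_derivative_cong_open[OF has_derivative_pd]]) (auto simp: sum_axis_mult)

lemma smooth_on_imp_differentiable: "smooth_on U f \<Longrightarrow> x \<in> U \<Longrightarrow> f differentiable (at x)"
  by (erule smooth_on.cases) auto

lemma dotd_chain:
  "(F has_real_derivative F') (at (f x)) \<Longrightarrow> f differentiable (at x) \<Longrightarrow>
   dotd xi (\<lambda>y. F (f y)) x = F' * dotd xi f x"
  by (simp add: dotd_def pd_chain sum_distrib_left mult_ac)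

lemma grad_up_chain:
  "(F has_real_derivative F') (at (f x)) \<Longrightarrow> f differentiable (at x) \<Longrightarrow>
   grad_up g (\<lambda>y. F (f y)) x b = F' * grad_up g f x b"
  by (simp add: grad_up_def pd_chain sum_distrib_left mult_ac)

lemma differentiable_chain:
  "(F has_real_derivative F') (at (f x)) \<Longrightarrow> f differentiable (at x) \<Longrightarrow>
   (\<lambda>y. F (f y)) differentiable (at x)"
  unfolding differentiable_def has_field_derivative_def by (blast intro: has_derivative_compose)

lemma matrix_inv_inverse:
  "invertible (A::real^'n^'n) \<Longrightarrow> A ** matrix_inv A = mat 1 \<and> matrix_inv A ** A = mat 1"
  unfolding matrix_inv_def invertible_def by (rule someI_ex)

lemma symmetric_matrix_inv:
  assumes "invertible (A::real^'n^'n)" "transpose A = A"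
  shows "transpose (matrix_inv A) = matrix_inv A"
proof -
  let ?B = "matrix_inv A"
  have AB: "A ** ?B = mat 1" "?B ** A = mat 1" using matrix_inv_inverse[OF assms(1)] by auto
  have "A ** transpose ?B = mat 1"
    using arg_cong[OF AB(2), of transpose] assms(2) by (simp add: matrix_transpose_mul)
  then have "?B = ?B ** (A ** transpose ?B)" by simp
  also have "\<dots> = transpose ?B" using AB by (simp add: matrix_mul_assoc)
  finally show ?thesis by simp
qed

lemma lorentzian_invertible:
  assumes "lorentzian (M::real^'n^'n)"
  shows "invertible M"
proof -
  obtain P :: "real^'n^'n" and i0
    where P: "transpose P ** M ** P = (\<chi> a b. if a = b then (if a = i0 then -1 else 1) else 0)"
    using assms unfolding lorentzian_def by blast
  have "det (transpose P ** M ** P) \<noteq> 0"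
    unfolding P by (subst det_diagonal) (auto simp: prod_zero_iff)
  then have "det M \<noteq> 0" by (simp add: det_mul)
  then show ?thesis by (simp add: invertible_det_nz)
qed

lemma differentiable_prod:
  assumes "finite I" "\<And>i. i \<in> I \<Longrightarrow> f i differentiable (at x)"
  shows "(\<lambda>y. \<Prod>i\<in>I. (f i y :: real)) differentiable (at x)"
proof -
  obtain D where "\<And>i. i \<in> I \<Longrightarrow> (f i has_derivative D i) (at x)"
    using assms(2) unfolding differentiable_def by metis
  then show ?thesis
    unfolding differentiable_def using assms(1) by (blast intro: has_derivative_prod)
qed

lemma differentiable_det:
  "(\<And>i j. (\<lambda>y. M y $ i $ j) differentiable (at x)) \<Longrightarrow>
   (\<lambda>y. det (M y :: real^'n^'n)) differentiable (at x)"
  unfolding det_def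
  by (intro differentiable_sum differentiable_mult differentiable_prod ballI finite_permutations)
     auto

lemma matrix_inv_cramer:
  assumes "invertible (A::real^'n^'n)"
  shows "matrix_inv A $ k $ j = det (\<chi> i l. if l = k then axis j 1 $ i else A $ i $ l) / det A"
proof -
  have "det A \<noteq> 0" using assms invertible_det_nz by blast
  moreover have "A *v (matrix_inv A *v axis j 1) = axis j 1"
    using matrix_inv_inverse[OF assms] by (simp add: matrix_vector_mul_assoc)
  ultimately have "matrix_inv A *v axis j 1
      = (\<chi> k. det (\<chi> i l. if l = k then axis j 1 $ i else A $ i $ l) / det A)"
    using cramer by blast
  moreover have "(matrix_inv A *v axis j 1) $ k = matrix_inv A $ k $ j"
    by (simp add: matrix_vector_mult_def axis_def mult.commute[of _ "if _ then _ else _"] sum_delta_mult)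
  ultimately show ?thesis by simp
qed

lemma differentiable_matrix_inv_entry:
  assumes "open U" "x \<in> U" "\<And>y. y \<in> U \<Longrightarrow> invertible (M y :: real^'n^'n)"
    and "\<And>i j. (\<lambda>y. M y $ i $ j) differentiable (at x)"
  shows "(\<lambda>y. matrix_inv (M y) $ k $ j) differentiable (at x)"
proof (rule differentiable_cong_open[OF _ assms(1,2)])
  show "matrix_inv (M y) $ k $ j = det (\<chi> i l. if l = k then axis j 1 $ i else M y $ i $ l) / det (M y)"
    if "y \<in> U" for y
    using assms(3)[OF that] by (rule matrix_inv_cramer)
  have "det (M x) \<noteq> 0" using assms(2,3) invertible_det_nz by blast
  moreover have "(\<lambda>y. det (\<chi> i l. if l = k then axis j 1 $ i else M y $ i $ l)) differentiable (at x)"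
  proof (rule differentiable_det)
    show "(\<lambda>y. (\<chi> i l. if l = k then axis j 1 $ i else M y $ i $ l) $ i $ l) differentiable (at x)" for i l
      by (cases "l = k") (simp_all add: assms(4))
  qed
  moreover have "(\<lambda>y. det (M y)) differentiable (at x)" by (rule differentiable_det) (simp add: assms(4))
  ultimately show "(\<lambda>y. det (\<chi> i l. if l = k then axis j 1 $ i else M y $ i $ l) / det (M y))
      differentiable (at x)"
    by simp
qed

section \<open>The power law \<open>\<chi>\<^sup>0\<close>\<close>

text \<open>\<open>chi0 c0 d = negpowr c0 (1 - d/2)\<close>, and on \<open>m < 0\<close> this family is closed under
  differentiation.\<close>

definition negpowr :: "real \<Rightarrow> real \<Rightarrow> real \<Rightarrow> real" where
  "negpowr c a m = c * (-m) powr a"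

lemma negpowr_has_real_derivative:
  assumes "\<forall>m<0. f m = negpowr c a m" and "m < 0"
  shows "(f has_real_derivative negpowr (-(c * a)) (a - 1) m) (at m)"
proof (rule has_field_derivative_transform_within_open[where S = "{m. m < 0}"])
  have "((\<lambda>m. (-m) powr a) has_real_derivative a * (-m) powr (a - 1) * -1) (at m)"
    using assms(2) by (intro DERIV_fun_powr derivative_eq_intros) auto
  from DERIV_cmult[OF this, of c]
  show "(negpowr c a has_real_derivative negpowr (-(c * a)) (a - 1) m) (at m)"
    by (simp add: negpowr_def[abs_def] algebra_simps)
qed (use assms in \<open>auto simp: open_Collect_less\<close>)

lemma deriv_negpowr:
  "\<forall>m<0. f m = negpowr c a m \<Longrightarrow> \<forall>m<0. deriv f m = negpowr (-(c * a)) (a - 1) m"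
  using negpowr_has_real_derivative DERIV_imp_deriv by blast

lemma negpowr_homogeneous: "m < 0 \<Longrightarrow> m * negpowr c (a - 1) m = - negpowr c a m"
  by (simp add: negpowr_def powr_diff field_simps)

abbreviation "chi0_mu c0 d \<equiv> deriv (chi0 c0 d)"
abbreviation "chi0_mumu c0 d \<equiv> deriv (chi0_mu c0 d)"
abbreviation "chi0_mumumu c0 d \<equiv> deriv (chi0_mumu c0 d)"

lemma chi0_derivatives:
  fixes c0 :: real and d :: nat
  assumes "m < 0"
  shows "(chi0 c0 d has_real_derivative chi0_mu c0 d m) (at m)"
    and "(chi0_mu c0 d has_real_derivative chi0_mumu c0 d m) (at m)"
    and "(chi0_mumu c0 d has_real_derivative chi0_mumumu c0 d m) (at m)"
    and "m * chi0_mumumu c0 d m = - (real d / 2 + 1) * chi0_mumu c0 d m"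
    and "chi0_mumu c0 d m = 0 \<longleftrightarrow> c0 = 0 \<or> d = 0 \<or> d = 2"
proof -
  define a where "a = 1 - real d / 2"
  define c1 c2 c3 where "c1 = - (c0 * a)" and "c2 = - (c1 * (a - 1))" and "c3 = - (c2 * (a - 2))"
  have chi0_eq: "\<forall>m<0. chi0 c0 d m = negpowr c0 a m"
    by (simp add: chi0_def negpowr_def a_def)
  have chi1_eq: "\<forall>m<0. chi0_mu c0 d m = negpowr c1 (a - 1) m"
    using deriv_negpowr[OF chi0_eq] by (simp add: c1_def)
  have chi2_eq: "\<forall>m<0. chi0_mumu c0 d m = negpowr c2 (a - 2) m"
    using deriv_negpowr[OF chi1_eq] by (simp add: c2_def)
  have chi3_eq: "\<forall>m<0. chi0_mumumu c0 d m = negpowr c3 (a - 3) m"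
    using deriv_negpowr[OF chi2_eq] by (simp add: c3_def)
  show "(chi0 c0 d has_real_derivative chi0_mu c0 d m) (at m)"
    using negpowr_has_real_derivative[OF chi0_eq assms] chi1_eq assms by (simp add: c1_def)
  show "(chi0_mu c0 d has_real_derivative chi0_mumu c0 d m) (at m)"
    using negpowr_has_real_derivative[OF chi1_eq assms] chi2_eq assms by (simp add: c2_def)
  show "(chi0_mumu c0 d has_real_derivative chi0_mumumu c0 d m) (at m)"
    using negpowr_has_real_derivative[OF chi2_eq assms] chi3_eq assms by (simp add: c3_def)
  have "m * negpowr c3 (a - 2 - 1) m = (a - 2) * negpowr c2 (a - 2) m"
    using negpowr_homogeneous[OF assms, of c3 "a - 2"] by (simp add: c3_def negpowr_def)
  then show "m * chi0_mumumu c0 d m = - (real d / 2 + 1) * chi0_mumu c0 d m"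
    using chi2_eq chi3_eq assms by (simp add: a_def algebra_simps)
  show "chi0_mumu c0 d m = 0 \<longleftrightarrow> c0 = 0 \<or> d = 0 \<or> d = 2"
    using chi2_eq assms by (auto simp: negpowr_def c1_def c2_def a_def)
qed

section \<open>Metric compatibility at a point\<close>

text \<open>The first-order jet at one point of a metric and a vector field, in coordinates:
  \<open>G a b = g\<^sub>a\<^sub>b\<close>, \<open>H a b = g\<^sup>a\<^sup>b\<close>, \<open>dG c a b = \<partial>\<^sub>c g\<^sub>a\<^sub>b\<close>, \<open>dH c a b = \<partial>\<^sub>c g\<^sup>a\<^sup>b\<close>,
  \<open>X a = \<xi>\<^sup>a\<close>, \<open>dX c a = \<partial>\<^sub>c \<xi>\<^sup>a\<close>; \<open>dH_eq\<close> is the derivative of the inverse matrix.\<close>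

locale metric_jet =
  fixes G H :: "'n::finite \<Rightarrow> 'n \<Rightarrow> real"
    and dG dH :: "'n \<Rightarrow> 'n \<Rightarrow> 'n \<Rightarrow> real"
    and X :: "'n \<Rightarrow> real" and dX :: "'n \<Rightarrow> 'n \<Rightarrow> real"
  assumes G_sym: "G a b = G b a" and H_sym: "H a b = H b a"
    and G_H: "(\<Sum>c\<in>UNIV. G a c * H c b) = (if a = b then 1 else 0)"
    and dG_sym: "dG c a b = dG c b a"
    and dH_eq: "dH e a b = - (\<Sum>p\<in>UNIV. \<Sum>q\<in>UNIV. H a p * dG e p q * H q b)"
begin

definition "Chr a b c = 1/2 * (\<Sum>e\<in>UNIV. H a e * (dG b e c + dG c e b - dG e b c))"

definition "Cov a b = dX a b + (\<Sum>c\<in>UNIV. Chr b a c * X c)"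

lemma lower_Chr: "(\<Sum>b\<in>UNIV. G c b * Chr b a d) = 1/2 * (dG a c d + dG d c a - dG c a d)"
proof -
  have "(\<Sum>b\<in>UNIV. G c b * Chr b a d)
      = 1/2 * (\<Sum>e\<in>UNIV. (\<Sum>b\<in>UNIV. G c b * H b e) * (dG a e d + dG d e a - dG e a d))"
    unfolding Chr_def sum_contract[symmetric] by (simp add: sum_distrib_left algebra_simps)
  then show ?thesis by (simp add: G_H eq_commute[of c] sum_delta_mult)
qed

lemma lower_Cov:
  "(\<Sum>b\<in>UNIV. (\<Sum>c\<in>UNIV. G b c * X c) * Cov a b)
     = 1/2 * (\<Sum>p\<in>UNIV. \<Sum>q\<in>UNIV. dG a p q * X p * X q + G p q * dX a p * X q + G p q * X p * dX a q)"
proof -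
  have "(\<Sum>b\<in>UNIV. (\<Sum>d\<in>UNIV. G b d * X d) * (\<Sum>c\<in>UNIV. Chr b a c * X c))
      = (\<Sum>d\<in>UNIV. \<Sum>c\<in>UNIV. X d * X c * (\<Sum>b\<in>UNIV. G d b * Chr b a c))"
    unfolding sum_product by (subst sum_cycle3) (simp add: sum_distrib_left G_sym mult_ac)
  also have "\<dots> = 1/2 * ((\<Sum>d\<in>UNIV. \<Sum>c\<in>UNIV. X d * X c * dG a d c)
       + (\<Sum>d\<in>UNIV. \<Sum>c\<in>UNIV. X d * X c * dG c d a) - (\<Sum>d\<in>UNIV. \<Sum>c\<in>UNIV. X d * X c * dG d a c))"
    by (simp add: lower_Chr sum_distrib_left algebra_simps sum_subtractf sum.distrib)
  also have "(\<Sum>d\<in>UNIV. \<Sum>c\<in>UNIV. X d * X c * dG c d a) = (\<Sum>d\<in>UNIV. \<Sum>c\<in>UNIV. X d * X c * dG d a c)"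
    by (subst sum.swap) (simp add: dG_sym mult.commute)
  finally have Chr_part: "(\<Sum>b\<in>UNIV. (\<Sum>d\<in>UNIV. G b d * X d) * (\<Sum>c\<in>UNIV. Chr b a c * X c))
      = 1/2 * (\<Sum>p\<in>UNIV. \<Sum>q\<in>UNIV. dG a p q * X p * X q)"
    by (simp add: mult_ac)
  have dX_part1: "(\<Sum>p\<in>UNIV. \<Sum>q\<in>UNIV. G p q * X p * dX a q) = (\<Sum>b\<in>UNIV. (\<Sum>c\<in>UNIV. G b c * X c) * dX a b)"
    by (subst sum.swap) (simp add: sum_distrib_right, intro sum.cong refl, simp add: G_sym mult_ac)
  have dX_part2: "(\<Sum>p\<in>UNIV. \<Sum>q\<in>UNIV. G p q * dX a p * X q) = (\<Sum>b\<in>UNIV. (\<Sum>c\<in>UNIV. G b c * X c) * dX a b)"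
    by (simp add: sum_distrib_left sum_distrib_right mult_ac)
  show ?thesis
    unfolding Cov_def sum.distrib distrib_left Chr_part dX_part1 dX_part2 by (simp add: algebra_simps)
qed

lemma div_H: "(\<Sum>a\<in>UNIV. dH a a b + (\<Sum>c\<in>UNIV. Chr a a c * H c b + Chr b a c * H a c)) = 0"
proof -
  define P where "P = (\<Sum>a\<in>UNIV. \<Sum>p\<in>UNIV. \<Sum>q\<in>UNIV. H a p * dG a p q * H q b)"
  define A where "A = (\<Sum>a\<in>UNIV. \<Sum>c\<in>UNIV. \<Sum>e\<in>UNIV. H a e * dG a e c * H c b)"
  define B where "B = (\<Sum>a\<in>UNIV. \<Sum>c\<in>UNIV. \<Sum>e\<in>UNIV. H a e * dG c e a * H c b)"
  define C where "C = (\<Sum>a\<in>UNIV. \<Sum>c\<in>UNIV. \<Sum>e\<in>UNIV. H a e * dG e a c * H c b)"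
  define A' where "A' = (\<Sum>a\<in>UNIV. \<Sum>c\<in>UNIV. \<Sum>e\<in>UNIV. H b e * dG a e c * H a c)"
  define B' where "B' = (\<Sum>a\<in>UNIV. \<Sum>c\<in>UNIV. \<Sum>e\<in>UNIV. H b e * dG c e a * H a c)"
  define C' where "C' = (\<Sum>a\<in>UNIV. \<Sum>c\<in>UNIV. \<Sum>e\<in>UNIV. H b e * dG e a c * H a c)"
  have dH_part: "(\<Sum>a\<in>UNIV. dH a a b) = - P"
    unfolding P_def dH_eq by (simp add: sum_negf)
  have trace_part: "(\<Sum>a\<in>UNIV. \<Sum>c\<in>UNIV. Chr a a c * H c b) = 1/2 * (A + B - C)"
    unfolding A_def B_def C_def Chr_def
    by (simp add: sum_distrib_left sum_distrib_right sum.distrib sum_subtractf algebra_simps)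
  have cross_part: "(\<Sum>a\<in>UNIV. \<Sum>c\<in>UNIV. Chr b a c * H a c) = 1/2 * (A' + B' - C')"
    unfolding A'_def B'_def C'_def Chr_def
    by (simp add: sum_distrib_left sum_distrib_right sum.distrib sum_subtractf algebra_simps)
  have "A = C"
    unfolding A_def C_def by (subst sum_reverse3) (simp add: H_sym)
  moreover have "A' = B'"
    unfolding A'_def B'_def by (subst sum.swap) (simp add: H_sym)
  moreover have "P = A'"
    unfolding P_def A'_def
    by (intro sum.cong refl) (subst dG_sym, simp add: H_sym mult_ac)
  moreover have "C' = B"
    unfolding B_def C'_def
    by (subst sum.swap[of _ UNIV UNIV]) (intro sum.cong refl, subst dG_sym, simp add: H_sym)
  moreover have "(\<Sum>a\<in>UNIV. dH a a b + (\<Sum>c\<in>UNIV. Chr a a c * H c b + Chr b a c * H a c))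
      = (\<Sum>a\<in>UNIV. dH a a b) + (\<Sum>a\<in>UNIV. \<Sum>c\<in>UNIV. Chr a a c * H c b)
        + (\<Sum>a\<in>UNIV. \<Sum>c\<in>UNIV. Chr b a c * H a c)"
    by (simp add: sum.distrib)
  ultimately show ?thesis
    unfolding dH_part trace_part cross_part by (simp add: field_simps)
qed

end

lemma frechet_derivative_comp_quadratic_form:
  fixes H :: "real^'n^'n"
  assumes H_sym: "transpose H = H"
    and F: "(F has_real_derivative F') (at (\<Sum>p\<in>UNIV. \<Sum>q\<in>UNIV. H $ p $ q * \<eta> $ p * \<eta> $ q))"
  shows "frechet_derivative (\<lambda>\<eta>. F (\<Sum>p\<in>UNIV. \<Sum>q\<in>UNIV. H $ p $ q * \<eta> $ p * \<eta> $ q)) (at \<eta>)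
           (axis a 1) = 2 * F' * (\<Sum>q\<in>UNIV. H $ a $ q * \<eta> $ q)"
proof -
  have H_entry_sym: "H $ i $ j = H $ j $ i" for i j
  proof -
    have "transpose H $ j $ i = H $ j $ i" using H_sym by simp
    then show ?thesis by (simp add: transpose_def)
  qed
  let ?Q = "\<lambda>\<eta>. \<Sum>p\<in>UNIV. \<Sum>q\<in>UNIV. H $ p $ q * \<eta> $ p * \<eta> $ q"
  let ?dQ = "\<lambda>h. \<Sum>p\<in>UNIV. \<Sum>q\<in>UNIV. H $ p $ q * (\<eta> $ p * h $ q + h $ p * \<eta> $ q)"
  have "(?Q has_derivative ?dQ) (at \<eta>)"
    by (auto intro!: derivative_eq_intros bounded_linear_imp_has_derivative bounded_linear_vec_nth
        simp: algebra_simps)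
  from has_derivative_compose[OF this F[unfolded has_field_derivative_def]]
  have "frechet_derivative (\<lambda>\<eta>. F (?Q \<eta>)) (at \<eta>) (axis a 1) = F' * ?dQ (axis a 1)"
    by (simp add: frechet_derivative_at[symmetric])
  also have "?dQ (axis a 1) = 2 * (\<Sum>q\<in>UNIV. H $ a $ q * \<eta> $ q)"
  proof -
    have dQ: "?dQ (axis a 1) = (\<Sum>p\<in>UNIV. \<eta> $ p * (\<Sum>q\<in>UNIV. axis a 1 $ q * H $ p $ q))
        + (\<Sum>p\<in>UNIV. axis a 1 $ p * (\<Sum>q\<in>UNIV. H $ p $ q * \<eta> $ q))"
      by (simp add: sum.distrib sum_distrib_left algebra_simps)
    have "(\<Sum>p\<in>UNIV. \<eta> $ p * H $ p $ a) = (\<Sum>q\<in>UNIV. H $ a $ q * \<eta> $ q)"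
      by (simp add: H_entry_sym mult.commute)
    then show ?thesis
      unfolding dQ sum_axis_mult by simp
  qed
  finally show ?thesis by simp
qed

lemma lower_xi: "(\<Sum>b\<in>UNIV. lower g xi x $ b * xi x $ b) = mu g xi x"
  by (simp add: lower_def mu_def sum_distrib_left mult_ac)

lemma symcov_symmetric_contraction:
  assumes w_sym: "\<And>a b. w a b = w b a"
  shows "(\<Sum>a\<in>UNIV. \<Sum>b\<in>UNIV. w a b * symcov g xi x a b)
    = (\<Sum>a\<in>UNIV. \<Sum>b\<in>UNIV. w a b * (\<Sum>c\<in>UNIV. g x $ b $ c * covd_vec g xi x a c))"
proof -
  let ?L = "\<lambda>a b. \<Sum>c\<in>UNIV. g x $ b $ c * covd_vec g xi x a c"
  have "w a b * symcov g xi x a b = 1/2 * (w a b * ?L a b) + 1/2 * (w a b * ?L b a)" for a b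
    by (simp add: symcov_def algebra_simps)
  then have "(\<Sum>a\<in>UNIV. \<Sum>b\<in>UNIV. w a b * symcov g xi x a b)
      = 1/2 * (\<Sum>a\<in>UNIV. \<Sum>b\<in>UNIV. w a b * ?L a b) + 1/2 * (\<Sum>a\<in>UNIV. \<Sum>b\<in>UNIV. w a b * ?L b a)"
    by (simp only: sum.distrib sum_distrib_left[symmetric])
  also have "(\<Sum>a\<in>UNIV. \<Sum>b\<in>UNIV. w a b * ?L b a) = (\<Sum>a\<in>UNIV. \<Sum>b\<in>UNIV. w a b * ?L a b)"
    by (subst sum.swap) (simp add: w_sym)
  finally show ?thesis by simp
qed

locale metric_patch =
  fixes U :: "(real^'n) set" and g :: "real^'n \<Rightarrow> real^'n^'n" and xi :: "real^'n \<Rightarrow> real^'n"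
  assumes U_open: "open U"
    and g_differentiable: "\<And>x a b. x \<in> U \<Longrightarrow> (\<lambda>y. g y $ a $ b) differentiable (at x)"
    and g_symmetric: "\<And>x. x \<in> U \<Longrightarrow> transpose (g x) = g x"
    and g_invertible: "\<And>x. x \<in> U \<Longrightarrow> invertible (g x)"
    and xi_differentiable: "\<And>x a. x \<in> U \<Longrightarrow> (\<lambda>y. xi y $ a) differentiable (at x)"
begin

lemma g_sym: "x \<in> U \<Longrightarrow> g x $ a $ b = g x $ b $ a"
  using arg_cong[OF g_symmetric, of x "\<lambda>M. M $ b $ a"] by (simp add: transpose_def)

lemma ginv_symmetric: "x \<in> U \<Longrightarrow> transpose (ginv g x) = ginv g x"
  unfolding ginv_def by (rule symmetric_matrix_inv[OF g_invertible g_symmetric])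

lemma ginv_sym: "x \<in> U \<Longrightarrow> ginv g x $ a $ b = ginv g x $ b $ a"
  using arg_cong[OF ginv_symmetric, of x "\<lambda>M. M $ b $ a"] by (simp add: transpose_def)

lemma g_ginv: "x \<in> U \<Longrightarrow> (\<Sum>c\<in>UNIV. g x $ a $ c * ginv g x $ c $ b) = (if a = b then 1 else 0)"
proof -
  assume "x \<in> U"
  then have "(g x ** ginv g x) $ a $ b = mat 1 $ a $ b"
    using matrix_inv_inverse[OF g_invertible] by (simp add: ginv_def)
  then show ?thesis by (simp add: matrix_matrix_mult_def mat_def)
qed

lemma ginv_g: "x \<in> U \<Longrightarrow> (\<Sum>c\<in>UNIV. ginv g x $ a $ c * g x $ c $ b) = (if a = b then 1 else 0)"
  using g_ginv[of x b a] by (simp add: g_sym ginv_sym mult.commute eq_commute)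

lemma ginv_differentiable: "x \<in> U \<Longrightarrow> (\<lambda>y. ginv g y $ a $ b) differentiable (at x)"
  unfolding ginv_def
  by (rule differentiable_matrix_inv_entry[OF U_open]) (auto intro: g_invertible g_differentiable)

lemma pd_ginv:
  assumes x: "x \<in> U"
  shows "pd (\<lambda>y. ginv g y $ a $ b) e x
    = - (\<Sum>p\<in>UNIV. \<Sum>q\<in>UNIV. ginv g x $ a $ p * pd (\<lambda>y. g y $ p $ q) e x * ginv g x $ q $ b)"
proof -
  have product_rule: "(\<Sum>c\<in>UNIV. g x $ p $ c * pd (\<lambda>y. ginv g y $ c $ b) e x)
      = - (\<Sum>q\<in>UNIV. pd (\<lambda>y. g y $ p $ q) e x * ginv g x $ q $ b)" for p
  proof -
    have "pd (\<lambda>y. \<Sum>c\<in>UNIV. g y $ p $ c * ginv g y $ c $ b) e x = pd (\<lambda>y. if p = b then 1 else 0) e x"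
      by (rule pd_cong_open[OF _ U_open x]) (simp_all add: g_ginv)
    then show ?thesis
      by (simp add: pd_sum pd_mult pd_const g_differentiable ginv_differentiable x sum.distrib
          eq_neg_iff_add_eq_0)
  qed
  have "pd (\<lambda>y. ginv g y $ a $ b) e x
      = (\<Sum>c\<in>UNIV. (\<Sum>p\<in>UNIV. ginv g x $ a $ p * g x $ p $ c) * pd (\<lambda>y. ginv g y $ c $ b) e x)"
    by (simp add: ginv_g x eq_commute[of a] sum_delta_mult)
  also have "\<dots> = (\<Sum>p\<in>UNIV. ginv g x $ a $ p * (\<Sum>c\<in>UNIV. g x $ p $ c * pd (\<lambda>y. ginv g y $ c $ b) e x))"
    by (rule sum_contract[symmetric])
  finally show ?thesis
    by (simp add: product_rule sum_distrib_left sum_negf mult_ac)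
qed

lemma metric_jet_at:
  assumes "x \<in> U"
  shows "metric_jet (\<lambda>a b. g x $ a $ b) (\<lambda>a b. ginv g x $ a $ b)
    (\<lambda>c a b. pd (\<lambda>y. g y $ a $ b) c x) (\<lambda>c a b. pd (\<lambda>y. ginv g y $ a $ b) c x)"
proof
  show "pd (\<lambda>y. g y $ a $ b) c x = pd (\<lambda>y. g y $ b $ a) c x" for a b c
    by (rule pd_cong_open[OF _ U_open assms]) (simp_all add: g_sym g_differentiable assms)
  show "(\<Sum>c\<in>UNIV. g x $ a $ c * ginv g x $ c $ b) = (if a = b then 1 else 0)" for a b
    using g_ginv[OF assms] .
qed (use assms in \<open>simp_all add: g_sym ginv_sym pd_ginv\<close>)

lemma mu_differentiable: "x \<in> U \<Longrightarrow> mu g xi differentiable (at x)"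
  unfolding mu_def[abs_def] by (simp add: g_differentiable xi_differentiable)

lemma pd_mu:
  "x \<in> U \<Longrightarrow> pd (mu g xi) c x = (\<Sum>p\<in>UNIV. \<Sum>q\<in>UNIV.
      pd (\<lambda>y. g y $ p $ q) c x * xi x $ p * xi x $ q
    + g x $ p $ q * pd (\<lambda>y. xi y $ p) c x * xi x $ q + g x $ p $ q * xi x $ p * pd (\<lambda>y. xi y $ q) c x)"
  unfolding mu_def[abs_def]
  by (simp add: pd_sum pd_mult g_differentiable xi_differentiable algebra_simps)

lemma lower_covd_vec:
  assumes x: "x \<in> U"
  shows "(\<Sum>b\<in>UNIV. lower g xi x $ b * covd_vec g xi x a b) = 1/2 * pd (mu g xi) a x"
proof -
  interpret J: metric_jet "\<lambda>a b. g x $ a $ b" "\<lambda>a b. ginv g x $ a $ b"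
    "\<lambda>c a b. pd (\<lambda>y. g y $ a $ b) c x" "\<lambda>c a b. pd (\<lambda>y. ginv g y $ a $ b) c x"
    "\<lambda>a. xi x $ a" "\<lambda>c a. pd (\<lambda>y. xi y $ a) c x"
    by (rule metric_jet_at[OF x])
  have "covd_vec g xi x a b = J.Cov a b" for a b
    by (simp add: covd_vec_def christoffel_def J.Cov_def J.Chr_def)
  then show ?thesis
    using J.lower_Cov[of a] by (simp add: lower_def pd_mu[OF x])
qed

lemma div_tensor_ginv: "x \<in> U \<Longrightarrow> div_tensor g (ginv g) x b = 0"
proof -
  assume x: "x \<in> U"
  interpret J: metric_jet "\<lambda>a b. g x $ a $ b" "\<lambda>a b. ginv g x $ a $ b"
    "\<lambda>c a b. pd (\<lambda>y. g y $ a $ b) c x" "\<lambda>c a b. pd (\<lambda>y. ginv g y $ a $ b) c x"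
    by (rule metric_jet_at[OF x])
  show ?thesis
    using J.div_H[of b] by (simp add: div_tensor_def christoffel_def J.Chr_def)
qed

lemma lower_ginv:
  assumes x: "x \<in> U"
  shows "(\<Sum>q\<in>UNIV. lower g xi x $ q * ginv g x $ q $ p) = xi x $ p"
proof -
  have "(\<Sum>q\<in>UNIV. lower g xi x $ q * ginv g x $ q $ p)
      = (\<Sum>q\<in>UNIV. ginv g x $ p $ q * (\<Sum>c\<in>UNIV. g x $ q $ c * xi x $ c))"
    by (simp add: lower_def ginv_sym[OF x, of _ p] mult.commute)
  also have "\<dots> = (\<Sum>c\<in>UNIV. (\<Sum>q\<in>UNIV. ginv g x $ p $ q * g x $ q $ c) * xi x $ c)"
    by (rule sum_contract)
  finally show ?thesis by (simp add: ginv_g[OF x] sum_delta_mult')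
qed

lemma ginv_lower: "x \<in> U \<Longrightarrow> (\<Sum>q\<in>UNIV. ginv g x $ p $ q * lower g xi x $ q) = xi x $ p"
  using lower_ginv[of x p] by (simp add: ginv_sym[of x p] mult.commute)

lemma lower_accel:
  assumes x: "x \<in> U"
  shows "(\<Sum>b\<in>UNIV. lower g xi x $ b * accel g xi x b) = 1/2 * dotd xi (mu g xi) x"
proof -
  have "(\<Sum>b\<in>UNIV. lower g xi x $ b * accel g xi x b)
      = (\<Sum>b\<in>UNIV. \<Sum>a\<in>UNIV. xi x $ a * (lower g xi x $ b * covd_vec g xi x a b))"
    by (simp add: accel_def sum_distrib_left mult_ac)
  also have "\<dots> = (\<Sum>a\<in>UNIV. xi x $ a * (\<Sum>b\<in>UNIV. lower g xi x $ b * covd_vec g xi x a b))"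
    by (subst sum.swap) (simp add: sum_distrib_left)
  also have "\<dots> = (\<Sum>a\<in>UNIV. xi x $ a * (1/2 * pd (mu g xi) a x))"
    by (simp only: lower_covd_vec[OF x])
  finally show ?thesis
    by (simp add: dotd_def sum_distrib_left mult_ac)
qed

lemma lower_grad_up:
  assumes x: "x \<in> U"
  shows "(\<Sum>b\<in>UNIV. lower g xi x $ b * grad_up g f x b) = dotd xi f x"
  unfolding grad_up_def sum_contract by (simp add: lower_ginv[OF x] dotd_def)

lemma div_vec_scaled:
  assumes x: "x \<in> U" and f: "f differentiable (at x)"
    and V: "\<And>y a. y \<in> U \<Longrightarrow> V y $ a = f y * xi y $ a"
  shows "div_vec g V x = f x * div_vec g xi x + dotd xi f x"
proof -
  have "pd (\<lambda>y. V y $ a) c x = f x * pd (\<lambda>y. xi y $ a) c x + pd f c x * xi x $ a" for a c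
    using pd_cong_open[OF _ U_open x, of "\<lambda>y. f y * xi y $ a" "\<lambda>y. V y $ a"]
    by (simp add: V pd_mult f xi_differentiable x)
  then show ?thesis
    by (simp add: div_vec_def covd_vec_def dotd_def V x sum.distrib sum_distrib_left algebra_simps)
qed

lemma div_tensor_fluid:
  assumes x: "x \<in> U" and f: "f differentiable (at x)" and h: "h differentiable (at x)"
  shows "div_tensor g (\<lambda>y. \<chi> a b. f y * xi y $ a * xi y $ b + h y * ginv g y $ a $ b) x b
    = dotd xi f x * xi x $ b + f x * (div_vec g xi x * xi x $ b + accel g xi x b) + grad_up g h x b"
proof -
  have "pd (\<lambda>y. f y * xi y $ a * xi y $ b + h y * ginv g y $ a $ b) c x
      = pd f c x * xi x $ a * xi x $ b + f x * (pd (\<lambda>y. xi y $ a) c x * xi x $ b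
        + xi x $ a * pd (\<lambda>y. xi y $ b) c x)
        + pd h c x * ginv g x $ a $ b + h x * pd (\<lambda>y. ginv g y $ a $ b) c x" for a b c
    by (simp add: pd_add pd_mult f h xi_differentiable ginv_differentiable x algebra_simps)
  then have "div_tensor g (\<lambda>y. \<chi> a b. f y * xi y $ a * xi y $ b + h y * ginv g y $ a $ b) x b
    = dotd xi f x * xi x $ b + f x * (div_vec g xi x * xi x $ b + accel g xi x b) + grad_up g h x b
      + h x * div_tensor g (ginv g) x b"
    by (simp add: div_tensor_def div_vec_def covd_vec_def accel_def dotd_def grad_up_def
        sum.distrib sum_distrib_left sum_distrib_right algebra_simps ginv_sym[OF x])
  then show ?thesis by (simp add: div_tensor_ginv[OF x])
qed

lemma xi_xi_symcov:
  assumes x: "x \<in> U"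
  shows "(\<Sum>a\<in>UNIV. \<Sum>b\<in>UNIV. xi x $ a * xi x $ b * symcov g xi x a b) = 1/2 * dotd xi (mu g xi) x"
proof -
  have inner: "(\<Sum>b\<in>UNIV. xi x $ b * (\<Sum>c\<in>UNIV. g x $ b $ c * covd_vec g xi x a c))
      = 1/2 * pd (mu g xi) a x" for a
    unfolding sum_contract lower_covd_vec[OF x, symmetric] by (simp add: lower_def g_sym[OF x] mult.commute)
  have "(\<Sum>a\<in>UNIV. \<Sum>b\<in>UNIV. xi x $ a * xi x $ b * (\<Sum>c\<in>UNIV. g x $ b $ c * covd_vec g xi x a c))
      = (\<Sum>a\<in>UNIV. xi x $ a * (\<Sum>b\<in>UNIV. xi x $ b * (\<Sum>c\<in>UNIV. g x $ b $ c * covd_vec g xi x a c)))"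
    by (simp add: mult.assoc sum_distrib_left)
  also have "\<dots> = (\<Sum>a\<in>UNIV. xi x $ a * (1/2 * pd (mu g xi) a x))"
    unfolding inner ..
  finally show ?thesis
    by (subst symcov_symmetric_contraction) (simp_all add: dotd_def sum_distrib_left mult_ac)
qed

lemma ginv_symcov:
  assumes x: "x \<in> U"
  shows "(\<Sum>a\<in>UNIV. \<Sum>b\<in>UNIV. ginv g x $ a $ b * symcov g xi x a b) = div_vec g xi x"
proof -
  have "(\<Sum>a\<in>UNIV. \<Sum>b\<in>UNIV. ginv g x $ a $ b * (\<Sum>c\<in>UNIV. g x $ b $ c * covd_vec g xi x a c))
      = div_vec g xi x"
    unfolding sum_contract by (simp add: ginv_g[OF x] sum_delta_mult' div_vec_def)
  then show ?thesis
    by (subst symcov_symmetric_contraction) (simp_all add: ginv_sym[OF x])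
qed

lemma ginv_g_trace: "x \<in> U \<Longrightarrow> (\<Sum>a\<in>UNIV. \<Sum>b\<in>UNIV. ginv g x $ a $ b * g x $ a $ b) = real CARD('n)"
  using ginv_g[of x] by (simp add: g_sym[of x _ a for a])

lemma ginv_lower_lower:
  assumes x: "x \<in> U"
  shows "(\<Sum>a\<in>UNIV. \<Sum>b\<in>UNIV. ginv g x $ a $ b * lower g xi x $ a * lower g xi x $ b) = mu g xi x"
proof -
  have "(\<Sum>a\<in>UNIV. \<Sum>b\<in>UNIV. ginv g x $ a $ b * lower g xi x $ a * lower g xi x $ b)
      = (\<Sum>b\<in>UNIV. (\<Sum>a\<in>UNIV. lower g xi x $ a * ginv g x $ a $ b) * lower g xi x $ b)"
    by (subst sum.swap) (simp add: sum_distrib_left sum_distrib_right mult_ac)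
  also have "\<dots> = (\<Sum>b\<in>UNIV. lower g xi x $ b * xi x $ b)"
    by (simp add: lower_ginv[OF x] mult.commute)
  finally show ?thesis by (simp add: lower_xi)
qed

lemma div_T0:
  assumes x: "x \<in> U" and timelike: "mu g xi x < 0"
  shows "div_tensor g (T0 c0 d g xi) x b
    = 4 * chi0_mumumu c0 d (mu g xi x) * dotd xi (mu g xi) x * xi x $ b
      + 4 * chi0_mumu c0 d (mu g xi x) * (div_vec g xi x * xi x $ b + accel g xi x b)
      + 2 * chi0_mumu c0 d (mu g xi x) * grad_up g (mu g xi) x b"
proof -
  note chi = chi0_derivatives[OF timelike, of c0 d]
  have F: "((\<lambda>m. 4 * chi0_mumu c0 d m) has_real_derivative 4 * chi0_mumumu c0 d (mu g xi x))
      (at (mu g xi x))"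
    by (rule DERIV_cmult[OF chi(3)])
  have H: "((\<lambda>m. 2 * chi0_mu c0 d m) has_real_derivative 2 * chi0_mumu c0 d (mu g xi x))
      (at (mu g xi x))"
    by (rule DERIV_cmult[OF chi(2)])
  have "T0 c0 d g xi = (\<lambda>y. \<chi> a b. 4 * chi0_mumu c0 d (mu g xi y) * xi y $ a * xi y $ b
      + 2 * chi0_mu c0 d (mu g xi y) * ginv g y $ a $ b)"
    by (simp add: T0_def[abs_def])
  then show ?thesis
    using div_tensor_fluid[OF x differentiable_chain[OF F mu_differentiable[OF x]]
        differentiable_chain[OF H mu_differentiable[OF x]]]
    by (simp add: dotd_chain[OF F mu_differentiable[OF x]] grad_up_chain[OF H mu_differentiable[OF x]])
qed

lemma S0_eq:
  assumes x: "x \<in> U" and timelike: "mu g xi x < 0"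
  shows "S0 c0 d g xi x = (\<chi> a. - 4 * mu g xi x * chi0_mumu c0 d (mu g xi x) * xi x $ a)"
proof -
  have "(chi0 c0 d has_real_derivative chi0_mu c0 d (mu g xi x))
      (at (\<Sum>p\<in>UNIV. \<Sum>q\<in>UNIV. ginv g x $ p $ q * lower g xi x $ p * lower g xi x $ q))"
    using chi0_derivatives(1)[OF timelike] by (simp add: ginv_lower_lower[OF x])
  from frechet_derivative_comp_quadratic_form[OF ginv_symmetric[OF x] this]
  have frechet: "frechet_derivative (\<lambda>\<eta>. chi0 c0 d (\<Sum>p\<in>UNIV. \<Sum>q\<in>UNIV. ginv g x $ p $ q * \<eta> $ p * \<eta> $ q))
      (at (lower g xi x)) (axis a 1) = 2 * chi0_mu c0 d (mu g xi x) * xi x $ a" for a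
    by (simp add: ginv_lower[OF x])
  have "(\<Sum>b\<in>UNIV. lower g xi x $ b * T0 c0 d g xi x $ a $ b)
      = 4 * chi0_mumu c0 d (mu g xi x) * xi x $ a * (\<Sum>b\<in>UNIV. lower g xi x $ b * xi x $ b)
        + 2 * chi0_mu c0 d (mu g xi x) * (\<Sum>b\<in>UNIV. ginv g x $ a $ b * lower g xi x $ b)" for a
    by (simp add: T0_def sum.distrib sum_distrib_left algebra_simps)
  then have "(\<Sum>b\<in>UNIV. lower g xi x $ b * T0 c0 d g xi x $ a $ b)
      = 4 * chi0_mumu c0 d (mu g xi x) * xi x $ a * mu g xi x + 2 * chi0_mu c0 d (mu g xi x) * xi x $ a"
    for a
    by (simp only: lower_xi ginv_lower[OF x])
  with frechet show ?thesis
    by (simp add: S0_def vec_eq_iff algebra_simps)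
qed

end

section \<open>The conformal fluid\<close>

lemma metric_patch_smooth_lorentzian:
  assumes "open U" "\<And>a b. smooth_on U (\<lambda>x. g x $ a $ b)" "\<And>x. x \<in> U \<Longrightarrow> lorentzian (g x)"
    and "\<And>a. smooth_on U (\<lambda>x. xi x $ a)"
  shows "metric_patch U g xi"
proof
  fix x a b assume x: "x \<in> U"
  show "(\<lambda>y. g y $ a $ b) differentiable (at x)" "(\<lambda>y. xi y $ a) differentiable (at x)"
    using smooth_on_imp_differentiable assms(2,4) x by blast+
  show "transpose (g x) = g x"
    using assms(3)[OF x] unfolding lorentzian_def by blast
  show "invertible (g x)"
    using lorentzian_invertible assms(3)[OF x] by blast
qed (rule assms(1))

locale conformal_fluid = metric_patch U g xi
  for U :: "(real^'n) set" and g xi +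
  fixes c0 :: real and d :: nat
  assumes d_def: "d = CARD('n)" and d3: "d \<ge> 3"
    and timelike: "\<And>x. x \<in> U \<Longrightarrow> mu g xi x < 0"
    and c0_nz: "c0 \<noteq> 0"
    and conserv: "\<And>x b. x \<in> U \<Longrightarrow> div_tensor g (T0 c0 d g xi) x b = 0"
begin

lemma chi0_mumu_nonzero: "x \<in> U \<Longrightarrow> chi0_mumu c0 d (mu g xi x) \<noteq> 0"
  using chi0_derivatives(5)[OF timelike] c0_nz d3 by auto

lemma expansion_rate:
  assumes x: "x \<in> U"
  shows "div_vec g xi x * mu g xi x = real d / 2 * dotd xi (mu g xi) x"
proof -
  define m dm where "m = mu g xi x" and "dm = dotd xi (mu g xi) x"
  have "0 = (\<Sum>b\<in>UNIV. lower g xi x $ b * div_tensor g (T0 c0 d g xi) x b)"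
    by (simp add: conserv x)
  also have "\<dots> = 4 * chi0_mumumu c0 d m * dm * (\<Sum>b\<in>UNIV. lower g xi x $ b * xi x $ b)
      + 4 * chi0_mumu c0 d m * (div_vec g xi x * (\<Sum>b\<in>UNIV. lower g xi x $ b * xi x $ b)
        + (\<Sum>b\<in>UNIV. lower g xi x $ b * accel g xi x b))
      + 2 * chi0_mumu c0 d m * (\<Sum>b\<in>UNIV. lower g xi x $ b * grad_up g (mu g xi) x b)"
    by (simp add: div_T0[OF x timelike[OF x]] sum.distrib sum_distrib_left m_def dm_def algebra_simps)
  also have "\<dots> = 4 * chi0_mumumu c0 d m * dm * m
      + 4 * chi0_mumu c0 d m * (div_vec g xi x * m + 1/2 * dm) + 2 * chi0_mumu c0 d m * dm"
    by (simp only: lower_xi lower_accel[OF x] lower_grad_up[OF x] m_def dm_def)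
  also have "\<dots> = 4 * dm * (m * chi0_mumumu c0 d m)
      + 4 * chi0_mumu c0 d m * (div_vec g xi x * m + 1/2 * dm) + 2 * chi0_mumu c0 d m * dm"
    by (simp add: algebra_simps)
  also have "\<dots> = 2 * chi0_mumu c0 d m * (2 * div_vec g xi x * m - real d * dm)"
    unfolding m_def chi0_derivatives(4)[OF timelike[OF x]] by (simp add: algebra_simps)
  finally show ?thesis
    using chi0_mumu_nonzero[OF x] by (simp add: m_def dm_def)
qed

lemma acceleration:
  assumes x: "x \<in> U"
  shows "accel g xi x b
    = dotd xi (mu g xi) x / mu g xi x * xi x $ b - 1/2 * grad_up g (mu g xi) x b"
proof -
  define m dm where "m = mu g xi x" and "dm = dotd xi (mu g xi) x"
  define chi2 chi3 where "chi2 = chi0_mumu c0 d m" and "chi3 = chi0_mumumu c0 d m"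
  have conservation: "4 * chi3 * dm * xi x $ b + 4 * chi2 * (div_vec g xi x * xi x $ b + accel g xi x b)
      + 2 * chi2 * grad_up g (mu g xi) x b = 0"
    using conserv[OF x, of b] by (simp add: div_T0[OF x timelike[OF x]] m_def dm_def chi2_def chi3_def)
  have homogeneity: "m * chi3 = - (real d / 2 + 1) * chi2"
    unfolding m_def chi2_def chi3_def by (rule chi0_derivatives(4)[OF timelike[OF x]])
  have "chi2 * (4 * m * accel g xi x b - 4 * dm * xi x $ b + 2 * m * grad_up g (mu g xi) x b)
      = m * (4 * chi3 * dm * xi x $ b + 4 * chi2 * (div_vec g xi x * xi x $ b + accel g xi x b)
          + 2 * chi2 * grad_up g (mu g xi) x b)
        - 4 * dm * xi x $ b * (m * chi3 + (real d / 2 + 1) * chi2)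
        - 4 * chi2 * xi x $ b * (div_vec g xi x * m - real d / 2 * dm)"
    by (simp add: algebra_simps)
  also have "\<dots> = 0"
    unfolding conservation homogeneity expansion_rate[OF x, folded m_def dm_def]
    by (simp add: algebra_simps)
  finally have "4 * m * accel g xi x b - 4 * dm * xi x $ b + 2 * m * grad_up g (mu g xi) x b = 0"
    using chi0_mumu_nonzero[OF x] by (simp add: chi2_def m_def)
  moreover have "m \<noteq> 0" using timelike[OF x] by (simp add: m_def)
  ultimately show ?thesis by (simp add: m_def dm_def field_simps)
qed

lemma div_S0:
  assumes x: "x \<in> U"
  shows "div_vec g (S0 c0 d g xi) x = 0"
proof -
  let ?m = "mu g xi x"
  let ?F = "\<lambda>m. - 4 * m * chi0_mumu c0 d m"
  note chi = chi0_derivatives[OF timelike[OF x], of c0 d]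
  have F: "(?F has_real_derivative - 4 * chi0_mumu c0 d ?m - 4 * ?m * chi0_mumumu c0 d ?m) (at ?m)"
    by (auto intro!: derivative_eq_intros chi(3))
  have "div_vec g (S0 c0 d g xi) x = ?F ?m * div_vec g xi x + dotd xi (\<lambda>y. ?F (mu g xi y)) x"
    by (rule div_vec_scaled[OF x differentiable_chain[OF F mu_differentiable[OF x]]])
       (simp add: S0_eq timelike)
  also have "\<dots> = - 4 * chi0_mumu c0 d ?m * (div_vec g xi x * ?m - real d / 2 * dotd xi (mu g xi) x)
      - 4 * dotd xi (mu g xi) x * (?m * chi0_mumumu c0 d ?m + (real d / 2 + 1) * chi0_mumu c0 d ?m)"
    unfolding dotd_chain[OF F mu_differentiable[OF x]] by (simp add: algebra_simps)
  also have "\<dots> = 0"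
    unfolding expansion_rate[OF x] chi0_derivatives(4)[OF timelike[OF x]]
    by (simp add: algebra_simps)
  finally show ?thesis .
qed

lemma conformal_Killing:
  assumes x: "x \<in> U"
    and decomposition: "\<And>a b. symcov g xi x a b = t * g x $ a $ b + s * lower g xi x $ a * lower g xi x $ b"
  shows "s = 0 \<and> t = div_vec g xi x / real d"
proof -
  define m where "m = mu g xi x"
  have "1/2 * dotd xi (mu g xi) x
      = t * (\<Sum>a\<in>UNIV. \<Sum>b\<in>UNIV. g x $ a $ b * xi x $ a * xi x $ b)
        + s * (\<Sum>a\<in>UNIV. lower g xi x $ a * xi x $ a) * (\<Sum>b\<in>UNIV. lower g xi x $ b * xi x $ b)"
    unfolding xi_xi_symcov[OF x, symmetric] decomposition
    by (simp add: sum.distrib sum_distrib_left sum_distrib_right algebra_simps)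
  then have along_xi: "1/2 * dotd xi (mu g xi) x = t * m + s * m * m"
    by (simp add: lower_xi m_def mu_def)
  have "div_vec g xi x
      = t * (\<Sum>a\<in>UNIV. \<Sum>b\<in>UNIV. ginv g x $ a $ b * g x $ a $ b)
        + s * (\<Sum>a\<in>UNIV. \<Sum>b\<in>UNIV. ginv g x $ a $ b * lower g xi x $ a * lower g xi x $ b)"
    unfolding ginv_symcov[OF x, symmetric] decomposition
    by (simp add: sum.distrib sum_distrib_left algebra_simps)
  then have trace: "div_vec g xi x = t * real d + s * m"
    by (simp add: ginv_g_trace[OF x] ginv_lower_lower[OF x] d_def m_def)
  have "s * m * m * (real d - 1) = 0"
    using expansion_rate[OF x] along_xi trace by (simp add: m_def algebra_simps)
  moreover have "m \<noteq> 0" using timelike[OF x] by (simp add: m_def)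
  ultimately have "s = 0" using d3 by simp
  then show ?thesis using trace d3 by simp
qed

end

theorem mainTheorem5:
  fixes U :: "(real^'n) set" and g :: "real^'n \<Rightarrow> real^'n^'n" and xi :: "real^'n \<Rightarrow> real^'n"
    and c0 :: real and d :: nat
  assumes d_def: "d = CARD('n)" and d3: "d \<ge> 3"
    and U_open: "open U"
    and g_smooth: "\<And>a b. smooth_on U (\<lambda>x. g x $ a $ b)"
    and g_lor: "\<And>x. x \<in> U \<Longrightarrow> lorentzian (g x)"
    and xi_smooth: "\<And>a. smooth_on U (\<lambda>x. xi x $ a)"
    and timelike: "\<And>x. x \<in> U \<Longrightarrow> mu g xi x < 0"
    and c0_nz: "c0 \<noteq> 0"
    and conserv: "\<And>x b. x \<in> U \<Longrightarrow> div_tensor g (T0 c0 d g xi) x b = 0"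
  shows "(\<forall>x\<in>U. dotd xi (mu g xi) x / mu g xi x = 2 * div_vec g xi x / real d
            \<and> (\<forall>b. accel g xi x b = (dotd xi (mu g xi) x / mu g xi x) * xi x $ b
                                     - (1/2) * grad_up g (mu g xi) x b))
       \<and> (\<forall>x\<in>U. S0 c0 d g xi x
                  = (\<chi> a. - 4 * mu g xi x * deriv (deriv (chi0 c0 d)) (mu g xi x) * xi x $ a)
                \<and> div_vec g (S0 c0 d g xi) x = 0)
       \<and> (\<forall>t s :: real^'n \<Rightarrow> real.
            (\<forall>x\<in>U. \<forall>a b. symcov g xi x a b = t x * g x $ a $ b + s x * lower g xi x $ a * lower g xi x $ b)
            \<longrightarrow> (\<forall>x\<in>U. s x = 0 \<and> t x = div_vec g xi x / real d
                      \<and> (\<forall>a b. symcov g xi x a b = (div_vec g xi x / real d) * g x $ a $ b)))"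
proof -
  interpret metric_patch U g xi
    using U_open g_smooth g_lor xi_smooth by (rule metric_patch_smooth_lorentzian)
  interpret conformal_fluid U g xi c0 d
    by unfold_locales (fact d_def d3 timelike c0_nz conserv)+
  show ?thesis
  proof (intro conjI ballI allI impI)
    fix x assume x: "x \<in> U"
    show "dotd xi (mu g xi) x / mu g xi x = 2 * div_vec g xi x / real d"
      using expansion_rate[OF x] timelike[OF x] d3 by (simp add: field_simps)
    show "accel g xi x b = dotd xi (mu g xi) x / mu g xi x * xi x $ b - 1/2 * grad_up g (mu g xi) x b"
      for b by (rule acceleration[OF x])
    show "S0 c0 d g xi x = (\<chi> a. - 4 * mu g xi x * chi0_mumu c0 d (mu g xi x) * xi x $ a)"
      by (rule S0_eq[OF x timelike[OF x]])
    show "div_vec g (S0 c0 d g xi) x = 0"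
      by (rule div_S0[OF x])
  next
    fix t s :: "real^'n \<Rightarrow> real" and x
    assume decomposition: "\<forall>x\<in>U. \<forall>a b. symcov g xi x a b
        = t x * g x $ a $ b + s x * lower g xi x $ a * lower g xi x $ b"
      and x: "x \<in> U"
    have "s x = 0 \<and> t x = div_vec g xi x / real d"
      using conformal_Killing[OF x] decomposition x by blast
    then show "s x = 0" "t x = div_vec g xi x / real d"
      and "symcov g xi x a b = div_vec g xi x / real d * g x $ a $ b" for a b
      using decomposition x by simp_all
  qed
qed

end
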